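(* Let $X$ be a second countable locally compact Abelian group with character group $Y$, and let $H$ be a closed subgroup of $Y$ such that the subgroup $H^{(2)}=\{2h:h\in H\}$ is dense in $H$. Put $K=A(X,H)=\{x\in X:(x,y)=1\text{ for all }y\in H\}$. Let $\alpha$ be a topological automorphism of $X$ such that $\tilde\alpha(H)=H$, where $\tilde\alpha$ is the adjoint automorphism of $Y$ defined by $(\alpha x,y)=(x,\tilde\alpha y)$. Let $\xi_1$ and $\xi_2$ be independent random variables with values in $X$ and distributions $\mu_1$ and $\mu_2$ such that $|\hat\mu_1(y)|=|\hat\mu_2(y)|=1$ for all $y\in H$. Assume that the conditional distribution of the linear form $L_2=\xi_1+\alpha\xi_2$ given $L_1=\xi_1+\xi_2$ is symmetric. Then there are shifts $\lambda_j=\mu_j*E_{-x_j}$ ($x_j\in X$, $j=1,2$) of the distributions $\mu_j$ such that $\lambda_1,\lambda_2$ are supported in $K$, and if $\eta_1,\eta_2$ are independent random variables with values in $X$ and distributions $\lambda_1,\lambda_2$, then the conditional distribution of the linear form $N_2=\eta_1+\alpha\eta_2$ given $N_1=\eta_1+\eta_2$ is symmetric.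
   Context: $(x,y)$ denotes the value of the character $y\in Y$ at $x\in X$. The characteristic function of a probability distribution $\mu$ on $X$ is $\hat\mu(y)=\int_X (x,y)\,d\mu(x)$, $y\in Y$. $E_x$ denotes the degenerate distribution concentrated at $x$, and $*$ denotes convolution. "The conditional distribution of $L_2$ given $L_1$ is symmetric" means that the random vectors $(L_1,L_2)$ and $(L_1,-L_2)$ have the same distribution. *)

theory Defs
  imports "HOL-Analysis.Analysis" "HOL-Probability.Probability"
begin

definition topological_ab_group :: "('a::{topological_space, ab_group_add}) itself \<Rightarrow> bool" where
  "topological_ab_group _ \<longleftrightarrow>
     continuous_on UNIV (\<lambda>p::'a \<times> 'a. fst p + snd p) \<and> continuous_on UNIV (uminus :: 'a \<Rightarrow> 'a)"

definition characters :: "('a::{topological_space, ab_group_add} \<Rightarrow> complex) set" where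
  "characters = {ch. continuous_on UNIV ch \<and> (\<forall>x. norm (ch x) = 1) \<and>
                     (\<forall>x y. ch (x + y) = ch x * ch y)}"

definition dual_topology :: "('a::{topological_space, ab_group_add} \<Rightarrow> complex) topology" where
  "dual_topology = subtopology
      (topology_generated_by {{ch. ch ` C \<subseteq> U} | C U. compact C \<and> open U}) characters"

definition closed_subgroup_dual :: "('a::{topological_space, ab_group_add} \<Rightarrow> complex) set \<Rightarrow> bool" where
  "closed_subgroup_dual H \<longleftrightarrow> H \<subseteq> characters \<and> (\<lambda>_. 1) \<in> H \<and>
     (\<forall>g\<in>H. \<forall>h\<in>H. (\<lambda>x. g x * h x) \<in> H) \<and> (\<forall>h\<in>H. (\<lambda>x. inverse (h x)) \<in> H) \<and>
     closedin dual_topology H"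

text \<open>H^(2) = {2h : h in H}, written multiplicatively.\<close>
definition doubles :: "('a \<Rightarrow> complex) set \<Rightarrow> ('a \<Rightarrow> complex) set" where
  "doubles H = {(\<lambda>x. (h x)^2) | h. h \<in> H}"

definition annihilator :: "('a \<Rightarrow> complex) set \<Rightarrow> 'a set" where
  "annihilator H = {x. \<forall>ch\<in>H. ch x = 1}"

definition top_automorphism :: "('a::{topological_space, ab_group_add} \<Rightarrow> 'a) \<Rightarrow> bool" where
  "top_automorphism \<alpha> \<longleftrightarrow> (\<exists>\<beta>. homeomorphism UNIV UNIV \<alpha> \<beta>) \<and> (\<forall>x y. \<alpha> (x + y) = \<alpha> x + \<alpha> y)"

text \<open>Adjoint automorphism: (alpha x, y) = (x, adj alpha y).\<close>
definition adjoint_aut :: "('a \<Rightarrow> 'a) \<Rightarrow> ('a \<Rightarrow> complex) \<Rightarrow> ('a \<Rightarrow> complex)" where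
  "adjoint_aut \<alpha> ch = ch \<circ> \<alpha>"

definition char_fun :: "'a measure \<Rightarrow> ('a \<Rightarrow> complex) \<Rightarrow> complex" where
  "char_fun \<mu> ch = (\<integral>x. ch x \<partial>\<mu>)"

text \<open>Conditional distribution of L2 given L1 is symmetric: (L1,L2) and (L1,-L2)
  have the same distribution.\<close>
definition cond_symmetric :: "'b measure \<Rightarrow> ('b \<Rightarrow> 'a::{topological_space, ab_group_add}) \<Rightarrow> ('b \<Rightarrow> 'a) \<Rightarrow> bool" where
  "cond_symmetric M L1 L2 \<longleftrightarrow>
     distr M (borel \<Otimes>\<^sub>M borel) (\<lambda>\<omega>. (L1 \<omega>, L2 \<omega>)) =
     distr M (borel \<Otimes>\<^sub>M borel) (\<lambda>\<omega>. (L1 \<omega>, - L2 \<omega>))"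

end

theory Submission
  imports Defs
begin

(* Since |hat mu_j(h)| = 1, every h in H is almost surely constant on xi_j; the exceptional sets
   are open null sets, so by second countability (Lindeloef) there is a single point x_j with
   h(xi_j) = h(x_j) almost surely for all h in H at once. As H is stable under the adjoint of
   alpha, h(L_2) = h(x_1 + alpha x_2) almost surely, and the symmetry of L_2 then gives
   h(x_1 + alpha x_2)^2 = 1: the point x_1 + alpha x_2 annihilates H^(2), hence by density H.
   Shifting xi_1 by -alpha x_2 and xi_2 by x_2 therefore moves both distributions into
   K = A(X,H), leaves L_2 unchanged and moves L_1 by a constant, so the symmetry survives. *)

lemma topological_ab_group_measurable_add:
  fixes f g :: "'m \<Rightarrow> 'a::{second_countable_topology, ab_group_add}"
  assumes "topological_ab_group TYPE('a)" "f \<in> borel_measurable M" "g \<in> borel_measurable M"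
  shows "(\<lambda>x. f x + g x) \<in> borel_measurable M"
proof -
  have "continuous_on UNIV (\<lambda>p::'a \<times> 'a. fst p + snd p)"
    using assms(1) unfolding topological_ab_group_def by blast
  then have "(\<lambda>p::'a \<times> 'a. fst p + snd p) \<in> borel_measurable (borel \<Otimes>\<^sub>M borel)"
    unfolding borel_prod by (rule borel_measurable_continuous_onI)
  from measurable_compose[OF measurable_Pair[OF assms(2,3)] this] show ?thesis by simp
qed

lemma topological_ab_group_measurable_uminus:
  fixes f :: "'m \<Rightarrow> 'a::{second_countable_topology, ab_group_add}"
  assumes "topological_ab_group TYPE('a)" "f \<in> borel_measurable M"
  shows "(\<lambda>x. - f x) \<in> borel_measurable M"
proof -
  have "continuous_on UNIV (uminus :: 'a \<Rightarrow> 'a)"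
    using assms(1) unfolding topological_ab_group_def by blast
  from measurable_compose[OF assms(2) borel_measurable_continuous_onI[OF this]] show ?thesis .
qed

lemma topological_ab_group_measurable_diff:
  fixes f g :: "'m \<Rightarrow> 'a::{second_countable_topology, ab_group_add}"
  assumes "topological_ab_group TYPE('a)" "f \<in> borel_measurable M" "g \<in> borel_measurable M"
  shows "(\<lambda>x. f x - g x) \<in> borel_measurable M"
  using topological_ab_group_measurable_add[OF assms(1,2) topological_ab_group_measurable_uminus[OF assms(1,3)]] by simp

lemma character_continuous: "h \<in> characters \<Longrightarrow> continuous_on UNIV h"
  unfolding characters_def by blast

lemma character_add: "h \<in> characters \<Longrightarrow> h (x + y) = h x * h y"
  unfolding characters_def by blast

lemma character_norm: "h \<in> characters \<Longrightarrow> norm (h x) = 1"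
  unfolding characters_def by blast

lemma character_nonzero: "h \<in> characters \<Longrightarrow> h x \<noteq> 0"
  using character_norm[of h x] by auto

lemma character_uminus:
  assumes "h \<in> characters"
  shows "h (- x) = inverse (h x)"
proof -
  have "h x * h (- x) = h 0"
    using character_add[OF assms, of x "- x"] by simp
  also have "h 0 = 1"
    using character_add[OF assms, of 0 0] character_norm[OF assms, of 0] by auto
  finally show ?thesis by (simp add: inverse_unique)
qed

lemma character_diff: "h \<in> characters \<Longrightarrow> h (x - y) = h x / h y"
  using character_add[of h x "- y"] character_uminus[of h y] by (simp add: divide_inverse)

lemma borel_measurable_character: "h \<in> characters \<Longrightarrow> h \<in> borel_measurable borel"
  by (rule borel_measurable_continuous_onI[OF character_continuous])

lemma closed_Collect_characters_eq:
  assumes "H \<subseteq> characters"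
  shows "closed {x. \<forall>h\<in>H. h x = c h}"
proof -
  have "closed {x. h x = c h}" if "h \<in> H" for h
    using that assms by (intro closed_Collect_eq character_continuous continuous_on_const) auto
  moreover have "{x. \<forall>h\<in>H. h x = c h} = (\<Inter>h\<in>H. {x. h x = c h})"
    by auto
  ultimately show ?thesis
    by (simp add: closed_INT)
qed

lemma annihilator_antimono: "G \<subseteq> H \<Longrightarrow> annihilator H \<subseteq> annihilator G"
  unfolding annihilator_def by blast

lemma closedin_dual_topology_characters_eq_1:
  "closedin dual_topology {h \<in> characters. h z = 1}"
proof -
  define \<S> :: "('a \<Rightarrow> complex) set set"
    where "\<S> = {{h. h ` C \<subseteq> U} | C U. compact C \<and> open U}"
  have dual: "dual_topology = subtopology (topology_generated_by \<S>) characters"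
    unfolding dual_topology_def \<S>_def ..
  have "UNIV \<in> \<S>"
    unfolding \<S>_def by (rule CollectI, rule exI[of _ "{}"], rule exI[of _ UNIV]) auto
  then have "topspace (dual_topology :: ('a \<Rightarrow> complex) topology) = characters"
    unfolding dual topspace_subtopology topology_generated_by_topspace by blast
  moreover have "{h. h ` {z} \<subseteq> - {1}} \<in> \<S>"
    unfolding \<S>_def
    by (rule CollectI, rule exI[of _ "{z}"], rule exI[of _ "- {1}"]) (simp add: open_Compl)
  then have "openin dual_topology ({h. h ` {z} \<subseteq> - {1}} \<inter> characters)"
    unfolding dual openin_subtopology by (blast intro: topology_generated_by_Basis)
  moreover have "{h. h ` {z} \<subseteq> - {1}} \<inter> characters = characters - {h \<in> characters. h z = 1}"
    by auto
  ultimately show ?thesis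
    unfolding closedin_def by auto
qed

lemma annihilator_subset_closure_of:
  "annihilator G \<subseteq> annihilator (dual_topology closure_of G)"
proof
  fix z assume z: "z \<in> annihilator G"
  have "topspace dual_topology \<inter> G \<subseteq> {h \<in> characters. h z = 1}"
    using z unfolding annihilator_def dual_topology_def topspace_subtopology by blast
  then have "dual_topology closure_of (topspace dual_topology \<inter> G) \<subseteq> {h \<in> characters. h z = 1}"
    by (rule closure_of_minimal[OF _ closedin_dual_topology_characters_eq_1])
  then show "z \<in> annihilator (dual_topology closure_of G)"
    unfolding annihilator_def closure_of_restrict[of _ G] by blast
qed

lemma character_eq_uminus_if_add_in_annihilator:
  assumes "a + b \<in> annihilator H" "h \<in> H" "h \<in> characters"
  shows "h a = h (- b)"
proof -
  have "h b * h a = 1"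
    using assms unfolding annihilator_def by (simp add: character_add[symmetric] add.commute)
  then have "inverse (h b) = h a"
    by (rule inverse_unique)
  then show ?thesis
    by (simp add: character_uminus[OF assms(3)])
qed

lemma additive_top_automorphism: "top_automorphism \<alpha> \<Longrightarrow> Modules.additive \<alpha>"
  unfolding top_automorphism_def Modules.additive_def by blast

lemma borel_measurable_top_automorphism: "top_automorphism \<alpha> \<Longrightarrow> \<alpha> \<in> borel_measurable borel"
  unfolding top_automorphism_def by (auto intro: borel_measurable_continuous_onI homeomorphism_cont1)

lemma complex_eq_1_if_norm_Re:
  fixes w :: complex
  assumes "norm w = 1" "Re w = 1"
  shows "w = 1"
  using assms by (auto simp: complex_eq_iff norm_complex_def)

lemma (in prob_space) AE_eq_expectation_if_unimodular:
  fixes g :: "'a \<Rightarrow> complex"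
  assumes g: "g \<in> borel_measurable M" "\<And>x. norm (g x) = 1"
    and norm_exp: "norm (expectation g) = 1"
  shows "AE x in M. g x = expectation g"
proof -
  define c where "c = expectation g"
  have "integrable M g"
    using g by (intro integrable_const_bound[of _ 1]) auto
  then have int: "integrable M (\<lambda>x. 1 - Re (cnj c * g x))"
    by auto
  have c_cnj: "c * cnj c = 1"
    using norm_exp unfolding c_def by (simp add: complex_norm_square[symmetric])
  \<comment> \<open>\<open>1 - Re (cnj c * g)\<close> is nonnegative with expectation \<open>1 - \<bar>c\<bar>\<^sup>2 = 0\<close>.\<close>
  have nonneg: "0 \<le> 1 - Re (cnj c * g x)" for x
    using complex_Re_le_cmod[of "cnj c * g x"] g(2)[of x] norm_exp by (simp add: c_def norm_mult)
  have "expectation (\<lambda>x. 1 - Re (cnj c * g x)) = 1 - Re (cnj c * c)"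
    using \<open>integrable M g\<close> by (simp add: c_def prob_space)
  also have "\<dots> = 0"
    using c_cnj by (simp add: mult.commute)
  finally have "AE x in M. 1 - Re (cnj c * g x) = 0"
    using integral_nonneg_eq_0_iff_AE[OF int] nonneg by auto
  then show ?thesis
  proof (rule eventually_mono)
    fix x assume "1 - Re (cnj c * g x) = 0"
    moreover have "norm (cnj c * g x) = 1"
      using g(2)[of x] norm_exp by (simp add: c_def norm_mult)
    ultimately have "cnj c * g x = 1"
      by (intro complex_eq_1_if_norm_Re) auto
    have "g x = c * cnj c * g x"
      using c_cnj by simp
    also have "\<dots> = c"
      using \<open>cnj c * g x = 1\<close> by (simp add: mult.assoc)
    finally show "g x = expectation g"
      by (simp add: c_def)
  qed
qed

lemma null_sets_Union_open:
  fixes M :: "'a::second_countable_topology measure"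
  assumes "sets M = sets borel" "\<And>U. U \<in> \<F> \<Longrightarrow> open U \<and> U \<in> null_sets M"
  shows "\<Union>\<F> \<in> null_sets M"
proof -
  obtain \<F>' where "\<F>' \<subseteq> \<F>" "countable \<F>'" "\<Union>\<F>' = \<Union>\<F>"
    using Lindelof[of \<F>] assms(2) by blast
  with null_sets_UN'[of \<F>' id M] assms(2) show ?thesis
    by auto
qed

lemma AE_characters_eq_char_fun:
  fixes \<mu> :: "'a::{second_countable_topology, ab_group_add} measure"
  assumes "prob_space \<mu>" "sets \<mu> = sets borel"
    and "H \<subseteq> characters" "\<forall>h\<in>H. norm (char_fun \<mu> h) = 1"
  shows "AE x in \<mu>. \<forall>h\<in>H. h x = char_fun \<mu> h"
proof -
  interpret prob_space \<mu> by fact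
  define bad where "bad h = {x. h x \<noteq> char_fun \<mu> h}" for h
  have "open (bad h) \<and> bad h \<in> null_sets \<mu>" if "h \<in> H" for h
  proof
    have h: "h \<in> characters"
      using that assms(3) by blast
    show "open (bad h)"
      unfolding bad_def
      by (intro open_Collect_neq character_continuous[OF h] continuous_on_const)
    have "h \<in> borel_measurable \<mu>"
      using borel_measurable_character[OF h] measurable_cong_sets[OF assms(2) refl] by blast
    then have "AE x in \<mu>. h x = char_fun \<mu> h"
      using AE_eq_expectation_if_unimodular[of h] character_norm[OF h] assms(4) that
      unfolding char_fun_def by auto
    moreover have "bad h \<in> sets \<mu>"
      using \<open>open (bad h)\<close> assms(2) by simp
    ultimately show "bad h \<in> null_sets \<mu>"
      by (simp add: AE_iff_null_sets bad_def)
  qed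
  then have "\<Union>(bad ` H) \<in> null_sets \<mu>"
    by (intro null_sets_Union_open[OF assms(2)]) auto
  then show ?thesis
    by (rule AE_I') (auto simp: bad_def)
qed

lemma (in prob_space) AE_imp_ex:
  assumes "AE \<omega> in M. P \<omega>"
  obtains \<omega> where "P \<omega>"
proof -
  have "\<exists>\<omega>. P \<omega>"
  proof (rule ccontr)
    assume "\<nexists>\<omega>. P \<omega>"
    with assms have "AE \<omega> in M. False"
      by (auto elim: eventually_mono)
    then show False
      by simp
  qed
  with that show thesis
    by blast
qed

lemma (in prob_space) AE_characters_constant:
  fixes X :: "'a \<Rightarrow> 'b::{second_countable_topology, ab_group_add}"
  assumes X: "random_variable borel X"
    and H: "H \<subseteq> characters" "\<forall>h\<in>H. norm (char_fun (distr M borel X) h) = 1"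
  obtains x0 where "AE \<omega> in M. \<forall>h\<in>H. h (X \<omega>) = h x0"
proof -
  let ?\<mu> = "distr M borel X"
  have ae: "AE x in ?\<mu>. \<forall>h\<in>H. h x = char_fun ?\<mu> h"
    using H by (intro AE_characters_eq_char_fun prob_space_distr X) auto
  then obtain x0 where x0: "\<forall>h\<in>H. h x0 = char_fun ?\<mu> h"
    using prob_space.AE_imp_ex[OF prob_space_distr[OF X]] by blast
  from ae have "AE x in ?\<mu>. \<forall>h\<in>H. h x = h x0"
    by (rule eventually_mono) (use x0 in simp)
  with X that show thesis
    by (blast dest: AE_distrD)
qed

lemma AE_characters_linear_form:
  assumes H: "H \<subseteq> characters" "\<And>h. h \<in> H \<Longrightarrow> h \<circ> \<alpha> \<in> H"
    and x1: "AE \<omega> in M. \<forall>h\<in>H. h (\<xi>1 \<omega>) = h x1"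
    and x2: "AE \<omega> in M. \<forall>h\<in>H. h (\<xi>2 \<omega>) = h x2"
  shows "AE \<omega> in M. \<forall>h\<in>H. h (\<xi>1 \<omega> + \<alpha> (\<xi>2 \<omega>)) = h (x1 + \<alpha> x2)"
  using x1 x2
proof eventually_elim
  case (elim \<omega>)
  show ?case
  proof
    fix h assume h: "h \<in> H"
    with elim H(2)[OF h] have "h (\<xi>1 \<omega>) = h x1" "(h \<circ> \<alpha>) (\<xi>2 \<omega>) = (h \<circ> \<alpha>) x2"
      by blast+
    with h H(1) show "h (\<xi>1 \<omega> + \<alpha> (\<xi>2 \<omega>)) = h (x1 + \<alpha> x2)"
      by (auto simp: character_add)
  qed
qed

lemma cond_symmetric_distr_compose:
  fixes L1 L2 :: "'m \<Rightarrow> 'a::{second_countable_topology, ab_group_add}"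
  assumes tag: "topological_ab_group TYPE('a)"
    and L: "L1 \<in> borel_measurable M" "L2 \<in> borel_measurable M"
    and sym: "cond_symmetric M L1 L2"
    and F: "F \<in> measurable (borel \<Otimes>\<^sub>M borel) N"
  shows "distr M N (\<lambda>\<omega>. F (L1 \<omega>, L2 \<omega>)) = distr M N (\<lambda>\<omega>. F (L1 \<omega>, - L2 \<omega>))"
proof -
  have L12: "(\<lambda>\<omega>. (L1 \<omega>, L2 \<omega>)) \<in> measurable M (borel \<Otimes>\<^sub>M borel)"
    and L12': "(\<lambda>\<omega>. (L1 \<omega>, - L2 \<omega>)) \<in> measurable M (borel \<Otimes>\<^sub>M borel)"
    using L topological_ab_group_measurable_uminus[OF tag L(2)] by (auto intro: measurable_Pair)
  have "distr M N (\<lambda>\<omega>. F (L1 \<omega>, L2 \<omega>)) =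
      distr (distr M (borel \<Otimes>\<^sub>M borel) (\<lambda>\<omega>. (L1 \<omega>, L2 \<omega>))) N F"
    using distr_distr[OF F L12] by (simp add: comp_def)
  also have "\<dots> = distr (distr M (borel \<Otimes>\<^sub>M borel) (\<lambda>\<omega>. (L1 \<omega>, - L2 \<omega>))) N F"
    using sym unfolding cond_symmetric_def by simp
  also have "\<dots> = distr M N (\<lambda>\<omega>. F (L1 \<omega>, - L2 \<omega>))"
    using distr_distr[OF F L12'] by (simp add: comp_def)
  finally show ?thesis .
qed

lemma cond_symmetric_iff_distr:
  fixes f g :: "'s \<Rightarrow> 'a::{second_countable_topology, ab_group_add}"
  assumes tag: "topological_ab_group TYPE('a)"
    and Z: "Z \<in> measurable M S"
    and fg: "f \<in> borel_measurable S" "g \<in> borel_measurable S"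
  shows "cond_symmetric M (\<lambda>\<omega>. f (Z \<omega>)) (\<lambda>\<omega>. g (Z \<omega>)) \<longleftrightarrow> cond_symmetric (distr M S Z) f g"
proof -
  have "(\<lambda>s. (f s, g s)) \<in> measurable S (borel \<Otimes>\<^sub>M borel)"
    and "(\<lambda>s. (f s, - g s)) \<in> measurable S (borel \<Otimes>\<^sub>M borel)"
    using fg topological_ab_group_measurable_uminus[OF tag fg(2)] by (auto intro: measurable_Pair)
  from this[THEN distr_distr, OF Z] show ?thesis
    unfolding cond_symmetric_def by (simp add: comp_def)
qed

lemma cond_symmetric_diff_const:
  fixes L1 L2 :: "'m \<Rightarrow> 'a::{second_countable_topology, ab_group_add}"
  assumes tag: "topological_ab_group TYPE('a)"
    and L: "L1 \<in> borel_measurable M" "L2 \<in> borel_measurable M"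
    and sym: "cond_symmetric M L1 L2"
  shows "cond_symmetric M (\<lambda>\<omega>. L1 \<omega> - c) L2"
proof -
  have "(\<lambda>p. (fst p - c, snd p)) \<in> measurable (borel \<Otimes>\<^sub>M borel) (borel \<Otimes>\<^sub>M borel :: ('a \<times> 'a) measure)"
    by (intro measurable_Pair topological_ab_group_measurable_diff[OF tag] measurable_fst measurable_snd) auto
  from cond_symmetric_distr_compose[OF tag L sym this] show ?thesis
    unfolding cond_symmetric_def by simp
qed

lemma cond_symmetric_linear_forms_cong:
  fixes \<zeta>1 \<zeta>2 :: "'m \<Rightarrow> 'a::{second_countable_topology, ab_group_add}" and \<eta>1 \<eta>2 :: "'n \<Rightarrow> 'a"
  assumes tag: "topological_ab_group TYPE('a)"
    and \<alpha>: "\<alpha> \<in> borel_measurable borel"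
    and \<zeta>: "(\<lambda>\<omega>. (\<zeta>1 \<omega>, \<zeta>2 \<omega>)) \<in> measurable M (borel \<Otimes>\<^sub>M borel)"
    and \<eta>: "(\<lambda>\<omega>. (\<eta>1 \<omega>, \<eta>2 \<omega>)) \<in> measurable N (borel \<Otimes>\<^sub>M borel)"
    and joint: "distr N (borel \<Otimes>\<^sub>M borel) (\<lambda>\<omega>. (\<eta>1 \<omega>, \<eta>2 \<omega>)) =
      distr M (borel \<Otimes>\<^sub>M borel) (\<lambda>\<omega>. (\<zeta>1 \<omega>, \<zeta>2 \<omega>))"
    and sym: "cond_symmetric M (\<lambda>\<omega>. \<zeta>1 \<omega> + \<zeta>2 \<omega>) (\<lambda>\<omega>. \<zeta>1 \<omega> + \<alpha> (\<zeta>2 \<omega>))"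
  shows "cond_symmetric N (\<lambda>\<omega>. \<eta>1 \<omega> + \<eta>2 \<omega>) (\<lambda>\<omega>. \<eta>1 \<omega> + \<alpha> (\<eta>2 \<omega>))"
proof -
  define s where "s p = fst p + snd p" for p :: "'a \<times> 'a"
  define l where "l p = fst p + \<alpha> (snd p)" for p :: "'a \<times> 'a"
  have sl: "s \<in> borel_measurable (borel \<Otimes>\<^sub>M borel)" "l \<in> borel_measurable (borel \<Otimes>\<^sub>M borel)"
    unfolding s_def l_def using \<alpha>
    by (auto intro!: topological_ab_group_measurable_add[OF tag] measurable_compose[OF measurable_snd])
  from sym have "cond_symmetric (distr N (borel \<Otimes>\<^sub>M borel) (\<lambda>\<omega>. (\<eta>1 \<omega>, \<eta>2 \<omega>))) s l"
    unfolding joint cond_symmetric_iff_distr[OF tag \<zeta> sl, symmetric] by (simp add: s_def l_def)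
  then show ?thesis
    unfolding cond_symmetric_iff_distr[OF tag \<eta> sl, symmetric] by (simp add: s_def l_def)
qed

lemma (in prob_space) in_annihilator_doubles_if_symmetric:
  fixes X :: "'a \<Rightarrow> 'b::{second_countable_topology, ab_group_add}"
  assumes tag: "topological_ab_group TYPE('b)"
    and X: "random_variable borel X"
    and sym: "distr M borel X = distr M borel (\<lambda>\<omega>. - X \<omega>)"
    and H: "H \<subseteq> characters"
    and ae: "AE \<omega> in M. \<forall>h\<in>H. h (X \<omega>) = h z"
  shows "z \<in> annihilator (doubles H)"
proof -
  have "{x \<in> space borel. \<forall>h\<in>H. h x = h z} \<in> sets borel"
    using closed_Collect_characters_eq[OF H] by simp
  with ae X have "AE x in distr M borel X. \<forall>h\<in>H. h x = h z"
    by (simp add: AE_distr_iff)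
  then have "AE \<omega> in M. \<forall>h\<in>H. h (- X \<omega>) = h z"
    unfolding sym using topological_ab_group_measurable_uminus[OF tag X] by (rule AE_distrD[rotated])
  with ae have "AE \<omega> in M. \<forall>h\<in>H. h (X \<omega>) = h z \<and> h (- X \<omega>) = h z"
    by eventually_elim blast
  then obtain \<omega> where \<omega>: "\<forall>h\<in>H. h (X \<omega>) = h z \<and> h (- X \<omega>) = h z"
    by (rule AE_imp_ex)
  have "(h z)\<^sup>2 = 1" if "h \<in> H" for h
  proof -
    have h: "h \<in> characters"
      using that H by blast
    have hX: "h (X \<omega>) = h z" and hmX: "h (- X \<omega>) = h z"
      using \<omega> that by blast+
    have "h z = inverse (h (X \<omega>))"
      using character_uminus[OF h] hmX by metis
    also note hX
    finally have "h z = inverse (h z)" .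
    with character_nonzero[OF h, of z] show ?thesis
      by (metis power2_eq_square right_inverse)
  qed
  then show ?thesis
    unfolding annihilator_def doubles_def by force
qed

lemma emeasure_shift_compl_annihilator:
  fixes X :: "'m \<Rightarrow> 'a::{second_countable_topology, ab_group_add}"
  assumes tag: "topological_ab_group TYPE('a)"
    and X: "X \<in> borel_measurable M"
    and H: "H \<subseteq> characters"
    and ae: "AE \<omega> in M. \<forall>h\<in>H. h (X \<omega>) = h c"
  shows "emeasure (distr (distr M borel X) borel (\<lambda>x. x - c)) (UNIV - annihilator H) = 0"
proof -
  have shift: "(\<lambda>x. x - c) \<in> borel_measurable borel"
    by (intro topological_ab_group_measurable_diff[OF tag] measurable_ident_sets) auto
  have X_shift: "(\<lambda>\<omega>. X \<omega> - c) \<in> borel_measurable M"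
    by (intro topological_ab_group_measurable_diff[OF tag X]) auto
  have K: "annihilator H \<in> sets borel"
    using closed_Collect_characters_eq[OF H, of "\<lambda>_. 1"] unfolding annihilator_def by simp
  from ae have "AE \<omega> in M. X \<omega> - c \<in> annihilator H"
  proof (rule eventually_mono)
    fix \<omega> assume "\<forall>h\<in>H. h (X \<omega>) = h c"
    with H show "X \<omega> - c \<in> annihilator H"
      unfolding annihilator_def by (auto simp: character_diff character_nonzero)
  qed
  then have "AE x in distr M borel (\<lambda>\<omega>. X \<omega> - c). x \<in> annihilator H"
    using X_shift K by (simp add: AE_distr_iff)
  then have "emeasure (distr M borel (\<lambda>\<omega>. X \<omega> - c)) (UNIV - annihilator H) = 0"
    using K by (subst AE_iff_measurable[symmetric]) auto
  then show ?thesis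
    using distr_distr[OF shift X] by (simp add: comp_def)
qed

lemma indep_var_joint_distr_eq:
  assumes "prob_space M" "prob_space.indep_var M S X1 T X2"
    and "prob_space N" "prob_space.indep_var N S Y1 T Y2"
    and "distr N S Y1 = distr M S X1" "distr N T Y2 = distr M T X2"
  shows "distr N (S \<Otimes>\<^sub>M T) (\<lambda>\<omega>. (Y1 \<omega>, Y2 \<omega>)) = distr M (S \<Otimes>\<^sub>M T) (\<lambda>\<omega>. (X1 \<omega>, X2 \<omega>))"
  using assms by (simp add: prob_space.indep_var_distribution_eq)

lemma cond_symmetric_shifted:
  fixes \<xi>1 \<xi>2 :: "'m \<Rightarrow> 'a::{second_countable_topology, ab_group_add}" and \<eta>1 \<eta>2 :: "'n \<Rightarrow> 'a"
  assumes tag: "topological_ab_group TYPE('a)"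
    and \<alpha>: "Modules.additive \<alpha>" "\<alpha> \<in> borel_measurable borel"
    and x12: "x1 + \<alpha> x2 = 0"
    and M: "prob_space M" "prob_space.indep_var M borel \<xi>1 borel \<xi>2"
    and sym: "cond_symmetric M (\<lambda>\<omega>. \<xi>1 \<omega> + \<xi>2 \<omega>) (\<lambda>\<omega>. \<xi>1 \<omega> + \<alpha> (\<xi>2 \<omega>))"
    and N: "prob_space N" "prob_space.indep_var N borel \<eta>1 borel \<eta>2"
    and \<eta>1: "distr N borel \<eta>1 = distr (distr M borel \<xi>1) borel (\<lambda>x. x - x1)"
    and \<eta>2: "distr N borel \<eta>2 = distr (distr M borel \<xi>2) borel (\<lambda>x. x - x2)"
  shows "cond_symmetric N (\<lambda>\<omega>. \<eta>1 \<omega> + \<eta>2 \<omega>) (\<lambda>\<omega>. \<eta>1 \<omega> + \<alpha> (\<eta>2 \<omega>))"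
proof -
  interpret M: prob_space M by (rule M(1))
  have \<xi>: "\<xi>1 \<in> borel_measurable M" "\<xi>2 \<in> borel_measurable M"
    using M.indep_var_rv1[OF M(2)] M.indep_var_rv2[OF M(2)] by auto
  have shift: "(\<lambda>x. x - c) \<in> borel_measurable borel" for c :: 'a
    by (intro topological_ab_group_measurable_diff[OF tag] measurable_ident_sets) auto
  define \<zeta>1 where "\<zeta>1 = (\<lambda>\<omega>. \<xi>1 \<omega> - x1)"
  define \<zeta>2 where "\<zeta>2 = (\<lambda>\<omega>. \<xi>2 \<omega> - x2)"
  have "M.indep_var borel \<zeta>1 borel \<zeta>2"
    using M.indep_var_compose[OF M(2) shift shift] by (simp add: comp_def \<zeta>1_def \<zeta>2_def)
  moreover have "distr (distr M borel \<xi>1) borel (\<lambda>x. x - x1) = distr M borel \<zeta>1"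
    and "distr (distr M borel \<xi>2) borel (\<lambda>x. x - x2) = distr M borel \<zeta>2"
    using distr_distr[OF shift \<xi>(1)] distr_distr[OF shift \<xi>(2)] by (simp_all add: comp_def \<zeta>1_def \<zeta>2_def)
  ultimately have joint: "distr N (borel \<Otimes>\<^sub>M borel) (\<lambda>\<omega>. (\<eta>1 \<omega>, \<eta>2 \<omega>)) =
      distr M (borel \<Otimes>\<^sub>M borel) (\<lambda>\<omega>. (\<zeta>1 \<omega>, \<zeta>2 \<omega>))"
    using indep_var_joint_distr_eq[OF M(1) _ N] \<eta>1 \<eta>2 by simp
  have x1: "x1 = - \<alpha> x2"
    using x12 by (simp add: eq_neg_iff_add_eq_0)
  have "(\<lambda>\<omega>. \<zeta>1 \<omega> + \<zeta>2 \<omega>) = (\<lambda>\<omega>. (\<xi>1 \<omega> + \<xi>2 \<omega>) - (x1 + x2))"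
    and "(\<lambda>\<omega>. \<zeta>1 \<omega> + \<alpha> (\<zeta>2 \<omega>)) = (\<lambda>\<omega>. \<xi>1 \<omega> + \<alpha> (\<xi>2 \<omega>))"
    by (simp_all add: \<zeta>1_def \<zeta>2_def Modules.additive.diff[OF \<alpha>(1)] x1 algebra_simps)
  moreover have "cond_symmetric M (\<lambda>\<omega>. (\<xi>1 \<omega> + \<xi>2 \<omega>) - (x1 + x2)) (\<lambda>\<omega>. \<xi>1 \<omega> + \<alpha> (\<xi>2 \<omega>))"
    using \<xi> \<alpha>(2)
    by (intro cond_symmetric_diff_const[OF tag _ _ sym])
      (auto intro!: topological_ab_group_measurable_add[OF tag] measurable_compose[OF \<xi>(2)])
  moreover have "(\<lambda>\<omega>. (\<zeta>1 \<omega>, \<zeta>2 \<omega>)) \<in> measurable M (borel \<Otimes>\<^sub>M borel)"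
    using \<xi> unfolding \<zeta>1_def \<zeta>2_def
    by (intro measurable_Pair topological_ab_group_measurable_diff[OF tag]) auto
  moreover have "(\<lambda>\<omega>. (\<eta>1 \<omega>, \<eta>2 \<omega>)) \<in> measurable N (borel \<Otimes>\<^sub>M borel)"
    using prob_space.indep_var_rv1[OF N] prob_space.indep_var_rv2[OF N] by (intro measurable_Pair)
  ultimately show ?thesis
    using cond_symmetric_linear_forms_cong[OF tag \<alpha>(2) _ _ joint] by simp
qed

theorem lemma2p5:
  fixes H :: "('a::{second_countable_topology, t2_space, ab_group_add} \<Rightarrow> complex) set"
    and \<alpha> :: "'a \<Rightarrow> 'a"
    and M :: "'b measure" and \<xi>1 \<xi>2 :: "'b \<Rightarrow> 'a"
  assumes "topological_ab_group TYPE('a)"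
    and "locally_compact_space (euclidean :: 'a topology)"
    and "closed_subgroup_dual H"
    and "H \<subseteq> dual_topology closure_of (doubles H)"
    and "top_automorphism \<alpha>"
    and "adjoint_aut \<alpha> ` H = H"
    and "prob_space M"
    and "prob_space.indep_var M borel \<xi>1 borel \<xi>2"
    and "\<forall>ch\<in>H. norm (char_fun (distr M borel \<xi>1) ch) = 1"
    and "\<forall>ch\<in>H. norm (char_fun (distr M borel \<xi>2) ch) = 1"
    and "cond_symmetric M (\<lambda>\<omega>. \<xi>1 \<omega> + \<xi>2 \<omega>) (\<lambda>\<omega>. \<xi>1 \<omega> + \<alpha> (\<xi>2 \<omega>))"
  shows "\<exists>x1 x2 :: 'a.
     (let lam1 = distr (distr M borel \<xi>1) borel (\<lambda>x. x - x1);
          lam2 = distr (distr M borel \<xi>2) borel (\<lambda>x. x - x2)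
      in emeasure lam1 (UNIV - annihilator H) = 0 \<and> emeasure lam2 (UNIV - annihilator H) = 0 \<and>
         (\<forall>(N :: 'c measure) \<eta>1 \<eta>2. prob_space N \<and> prob_space.indep_var N borel \<eta>1 borel \<eta>2 \<and>
             distr N borel \<eta>1 = lam1 \<and> distr N borel \<eta>2 = lam2 \<longrightarrow>
             cond_symmetric N (\<lambda>\<omega>. \<eta>1 \<omega> + \<eta>2 \<omega>) (\<lambda>\<omega>. \<eta>1 \<omega> + \<alpha> (\<eta>2 \<omega>))))"
proof -
  note tag = assms(1)
  interpret M: prob_space M by (rule assms(7))
  have H: "H \<subseteq> characters" and H_\<alpha>: "\<And>h. h \<in> H \<Longrightarrow> h \<circ> \<alpha> \<in> H"
    using assms(3,6) unfolding closed_subgroup_dual_def adjoint_aut_def by blast+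
  have \<alpha>: "Modules.additive \<alpha>" "\<alpha> \<in> borel_measurable borel"
    using assms(5) by (rule additive_top_automorphism, rule borel_measurable_top_automorphism)
  have \<xi>: "\<xi>1 \<in> borel_measurable M" "\<xi>2 \<in> borel_measurable M"
    using M.indep_var_rv1[OF assms(8)] M.indep_var_rv2[OF assms(8)] by auto
  then have L: "(\<lambda>\<omega>. \<xi>1 \<omega> + \<xi>2 \<omega>) \<in> borel_measurable M"
      "(\<lambda>\<omega>. \<xi>1 \<omega> + \<alpha> (\<xi>2 \<omega>)) \<in> borel_measurable M"
    using \<alpha>(2) by (auto intro!: topological_ab_group_measurable_add[OF tag] measurable_compose[OF \<xi>(2)])
  obtain x1 where x1: "AE \<omega> in M. \<forall>h\<in>H. h (\<xi>1 \<omega>) = h x1"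
    using M.AE_characters_constant[OF \<xi>(1) H assms(9)] by blast
  obtain x2 where x2: "AE \<omega> in M. \<forall>h\<in>H. h (\<xi>2 \<omega>) = h x2"
    using M.AE_characters_constant[OF \<xi>(2) H assms(10)] by blast
  have "distr M borel (\<lambda>\<omega>. \<xi>1 \<omega> + \<alpha> (\<xi>2 \<omega>)) =
      distr M borel (\<lambda>\<omega>. - (\<xi>1 \<omega> + \<alpha> (\<xi>2 \<omega>)))"
    using cond_symmetric_distr_compose[OF tag L assms(11) measurable_snd] by simp
  then have "x1 + \<alpha> x2 \<in> annihilator (doubles H)"
    using M.in_annihilator_doubles_if_symmetric[OF tag L(2) _ H AE_characters_linear_form[OF H H_\<alpha> x1 x2]]
    by blast
  then have "x1 + \<alpha> x2 \<in> annihilator H"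
    using assms(4) annihilator_subset_closure_of annihilator_antimono by blast
  then have x1_eq: "h x1 = h (- \<alpha> x2)" if "h \<in> H" for h
    using that H by (blast intro: character_eq_uminus_if_add_in_annihilator)
  from x1 have x1': "AE \<omega> in M. \<forall>h\<in>H. h (\<xi>1 \<omega>) = h (- \<alpha> x2)"
    by (rule eventually_mono) (simp add: x1_eq)
  show ?thesis
    unfolding Let_def
    using emeasure_shift_compl_annihilator[OF tag \<xi>(1) H x1'] emeasure_shift_compl_annihilator[OF tag \<xi>(2) H x2]
      cond_symmetric_shifted[OF tag \<alpha> add.left_inverse assms(7,8,11)]
    by blast
qed

end
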